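(* Let $n\in\mathbb N$ and let $\alpha_n\subseteq\bigcup_{j=1}^n S_j$ be a constrained optimal set of $n$-points for $P$ with $\operatorname{card}(\alpha_n)=n$, say $\alpha_n=\{(a_j,b_j):1\le j\le n\}$ with $a_1<a_2<\cdots<a_n$. Then for every $1\le j\le n$, \[(a_j,b_j)=U_n^{-1}\Big(E\big(X : (X,0)\in M((a_j,b_j)\mid\alpha_n)\big)\Big),\] where $X$ is a random variable with distribution $P$ and $E(X: (X,0)\in M)$ denotes the conditional expectation of $X$ given that $(X,0)$ lies in the Voronoi region $M$. In particular every element of $\alpha_n$ lies on $S_n$.
   Context: $P$ is the Cantor distribution on $\mathbb R$: the unique Borel probability measure with $P=\frac12P\circ T_1^{-1}+\frac12 P\circ T_2^{-1}$, where $T_1(x)=\frac x3$, $T_2(x)=\frac x3+\frac23$; its support is the classical Cantor set in $[0,1]$. Points $x\in\mathbb R$ are identified with $(x,0)\in\mathbb R^2$. For $j\in\mathbb N$, the constraint $S_j=\{(x,y): -\frac1j\le x\le 1,\ y=x+\frac1j\}$. For a finite set $\alpha\subset\mathbb R^2$ the distortion is $V(P;\alpha)=\int\min_{(p,q)\in\alpha}\big((x-p)^2+q^2\big)\,dP(x)$. The $n$th constrained quantization error is $V_n=\inf\{V(P;\alpha):\alpha\subseteq\bigcup_{j=1}^nS_j,\ 1\le\operatorname{card}(\alpha)\le n\}$, and a constrained optimal set of $n$-points is a set $\alpha$ attaining this infimum. For finite $\alpha\subset\mathbb R^2$ and $a\in\alpha$, the Voronoi region $M(a\mid\alpha)$ is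 the set of points of $\mathbb R^2$ whose Euclidean distance to $a$ is minimal among the elements of $\alpha$. For $n\in\mathbb N$, $U_n:S_n\to[-\frac1n,2+\frac1n]$ is the bijection $U_n(x,x+\frac1n)=2x+\frac1n$, with inverse $U_n^{-1}(u)=\big(\frac12(u-\frac1n),\frac12(u-\frac1n)+\frac1n\big)$; $U_n(p)$ is the point where the line through $p$ perpendicular to $S_n$ meets the real axis. *)

theory Defs
  imports "HOL-Probability.Probability"
begin

definition T1 :: "real \<Rightarrow> real" where "T1 x = x / 3"
definition T2 :: "real \<Rightarrow> real" where "T2 x = x / 3 + 2 / 3"

definition is_cantor_dist :: "real measure \<Rightarrow> bool" where
  "is_cantor_dist P \<longleftrightarrow> prob_space P \<and> sets P = sets borel \<and>
     (\<forall>A \<in> sets borel. measure P A = measure P (T1 -` A) / 2 + measure P (T2 -` A) / 2)"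

definition S :: "nat \<Rightarrow> (real \<times> real) set" where
  "S j = {(x, y). - 1 / real j \<le> x \<and> x \<le> 1 \<and> y = x + 1 / real j}"

definition distortion :: "real measure \<Rightarrow> (real \<times> real) set \<Rightarrow> real" where
  "distortion P \<alpha> = (\<integral>x. Min ((\<lambda>(p, q). (x - p)^2 + q^2) ` \<alpha>) \<partial>P)"

definition admissible :: "nat \<Rightarrow> (real \<times> real) set \<Rightarrow> bool" where
  "admissible n \<alpha> \<longleftrightarrow> finite \<alpha> \<and> \<alpha> \<subseteq> (\<Union>j\<in>{1..n}. S j) \<and> 1 \<le> card \<alpha> \<and> card \<alpha> \<le> n"

definition constrained_error :: "real measure \<Rightarrow> nat \<Rightarrow> real" where
  "constrained_error P n = Inf {distortion P \<alpha> | \<alpha>. admissible n \<alpha>}"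

definition constrained_optimal :: "real measure \<Rightarrow> nat \<Rightarrow> (real \<times> real) set \<Rightarrow> bool" where
  "constrained_optimal P n \<alpha> \<longleftrightarrow> admissible n \<alpha> \<and> distortion P \<alpha> = constrained_error P n"

definition voronoi :: "(real \<times> real) \<Rightarrow> (real \<times> real) set \<Rightarrow> (real \<times> real) set" where
  "voronoi a \<alpha> = {z. \<forall>b\<in>\<alpha>. dist z a \<le> dist z b}"

definition cond_exp :: "real measure \<Rightarrow> real set \<Rightarrow> real" where
  "cond_exp P A = (LINT x:A|P. x) / measure P A"

definition U_inv :: "nat \<Rightarrow> real \<Rightarrow> real \<times> real" where
  "U_inv n u = ((u - 1 / real n) / 2, (u - 1 / real n) / 2 + 1 / real n)"

end

theory Submission
  imports Defs
begin

text \<open>Let a = (p, p + 1/j) \<in> S j be a point of a constrained optimal set \<alpha> with Voronoi region V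
  and let E be the conditional expectation of X on V. Replacing a by any a' \<in> S n keeps the set
  admissible and changes the distortion only on V, so the integral over V of
  |(x,0) - a'|^2 - |(x,0) - a|^2 is nonnegative. For a' = U_inv n E the terms quadratic in x
  cancel and this integral equals
  P(V) ((1/n - 1/j) (E + (1/n + 1/j)/2) - 2 (p - (E - 1/j)/2)^2),
  a sum of two nonpositive terms. Hence both vanish once P(V) > 0, which forces j = n and
  a = U_inv n E. The positivity P(V) > 0 holds because every point 3^-m carries positive mass
  near it: if V were null, dropping a would not change the distortion, while adding the projection
  of some 3^-m onto S n (a point not already in \<alpha>) lowers it strictly.\<close>

definition sq_dist :: "real \<Rightarrow> real \<times> real \<Rightarrow> real" where
  "sq_dist x b = (x - fst b)^2 + (snd b)^2"

definition min_sq_dist :: "(real \<times> real) set \<Rightarrow> real \<Rightarrow> real" where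
  "min_sq_dist \<alpha> x = Min (sq_dist x ` \<alpha>)"

definition voronoi_cell :: "real \<times> real \<Rightarrow> (real \<times> real) set \<Rightarrow> real set" where
  "voronoi_cell a \<alpha> = {x. \<forall>b\<in>\<alpha>. sq_dist x a \<le> sq_dist x b}"

lemma distortion_eq_integral_min_sq_dist: "distortion P \<alpha> = (\<integral>x. min_sq_dist \<alpha> x \<partial>P)"
proof -
  have "(\<lambda>(p, q). (x - p)^2 + q^2) = sq_dist x" for x :: real
    by (auto simp: sq_dist_def)
  then show ?thesis
    by (simp add: distortion_def min_sq_dist_def)
qed

lemma dist_real_axis: "dist (x, 0) b = sqrt (sq_dist x b)"
  by (cases b) (simp add: dist_Pair_Pair dist_real_def sq_dist_def power2_commute)

lemma voronoi_real_axis: "{x. (x, 0) \<in> voronoi a \<alpha>} = voronoi_cell a \<alpha>"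
  by (simp add: voronoi_def voronoi_cell_def dist_real_axis)

lemma continuous_on_sq_dist [continuous_intros]: "continuous_on A (\<lambda>x. sq_dist x b)"
  unfolding sq_dist_def by (intro continuous_intros)

lemma min_sq_dist_insert:
  "finite \<alpha> \<Longrightarrow> \<alpha> \<noteq> {} \<Longrightarrow> min_sq_dist (insert b \<alpha>) x = min (sq_dist x b) (min_sq_dist \<alpha> x)"
  by (simp add: min_sq_dist_def)

lemma continuous_on_min_sq_dist:
  assumes "finite \<alpha>" "\<alpha> \<noteq> {}"
  shows "continuous_on A (min_sq_dist \<alpha>)"
  using assms
proof (induction rule: finite_ne_induct)
  case (singleton b)
  then show ?case by (simp add: min_sq_dist_def continuous_on_sq_dist)
next
  case (insert b \<alpha>)
  then show ?case
    by (simp add: min_sq_dist_insert continuous_intros)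
qed

lemma closed_voronoi_cell: "closed (voronoi_cell a \<alpha>)"
proof -
  have "voronoi_cell a \<alpha> = (\<Inter>b\<in>\<alpha>. {x. sq_dist x a \<le> sq_dist x b})"
    by (auto simp: voronoi_cell_def)
  then show ?thesis
    by (auto intro!: closed_INT closed_Collect_le continuous_intros)
qed

lemma min_sq_dist_le: "finite \<alpha> \<Longrightarrow> b \<in> \<alpha> \<Longrightarrow> min_sq_dist \<alpha> x \<le> sq_dist x b"
  by (simp add: min_sq_dist_def)

lemma min_sq_dist_attained:
  assumes "finite \<alpha>" "\<alpha> \<noteq> {}"
  obtains b where "b \<in> \<alpha>" "min_sq_dist \<alpha> x = sq_dist x b"
proof -
  have "Min (sq_dist x ` \<alpha>) \<in> sq_dist x ` \<alpha>"
    using assms by (intro Min_in) auto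
  then show ?thesis
    using that by (auto simp: min_sq_dist_def)
qed

lemma min_sq_dist_nonneg: "finite \<alpha> \<Longrightarrow> \<alpha> \<noteq> {} \<Longrightarrow> 0 \<le> min_sq_dist \<alpha> x"
  by (metis min_sq_dist_attained sq_dist_def sum_power2_ge_zero)

lemma min_sq_dist_antimono:
  "finite \<beta> \<Longrightarrow> \<alpha> \<noteq> {} \<Longrightarrow> \<alpha> \<subseteq> \<beta> \<Longrightarrow> min_sq_dist \<beta> x \<le> min_sq_dist \<alpha> x"
  unfolding min_sq_dist_def by (intro Min_antimono) auto

lemma min_sq_dist_voronoi_cell:
  assumes "finite \<alpha>" "a \<in> \<alpha>" "x \<in> voronoi_cell a \<alpha>"
  shows "min_sq_dist \<alpha> x = sq_dist x a"
proof -
  obtain b where "b \<in> \<alpha>" "min_sq_dist \<alpha> x = sq_dist x b"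
    using min_sq_dist_attained assms(1,2) by blast
  then show ?thesis
    using assms min_sq_dist_le[of \<alpha> a x] by (force simp: voronoi_cell_def)
qed

lemma min_sq_dist_outside_voronoi_cell:
  assumes "finite \<alpha>" "a \<in> \<alpha>" "x \<notin> voronoi_cell a \<alpha>"
  shows "min_sq_dist (\<alpha> - {a}) x = min_sq_dist \<alpha> x"
proof -
  obtain b where b: "b \<in> \<alpha>" "sq_dist x b < sq_dist x a"
    using assms(3) by (auto simp: voronoi_cell_def not_le)
  obtain b0 where b0: "b0 \<in> \<alpha>" "min_sq_dist \<alpha> x = sq_dist x b0"
    using min_sq_dist_attained assms(1,2) by blast
  have "b0 \<noteq> a"
    using b b0 min_sq_dist_le[OF assms(1) b(1), of x] by auto
  then have "min_sq_dist (\<alpha> - {a}) x \<le> min_sq_dist \<alpha> x"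
    using b0 min_sq_dist_le[of "\<alpha> - {a}" b0 x] assms(1) by simp
  moreover have "min_sq_dist \<alpha> x \<le> min_sq_dist (\<alpha> - {a}) x"
    using b assms(1) by (intro min_sq_dist_antimono) auto
  ultimately show ?thesis by simp
qed

lemma min_sq_dist_replace_le:
  assumes "finite \<alpha>" "a \<in> \<alpha>"
  shows "min_sq_dist (insert a' (\<alpha> - {a})) x
    \<le> min_sq_dist \<alpha> x + indicator (voronoi_cell a \<alpha>) x * (sq_dist x a' - sq_dist x a)"
proof (cases "x \<in> voronoi_cell a \<alpha>")
  case True
  then show ?thesis
    using assms min_sq_dist_voronoi_cell[OF assms True] min_sq_dist_le[of _ a' x] by simp
next
  case False
  have "min_sq_dist (insert a' (\<alpha> - {a})) x \<le> min_sq_dist (\<alpha> - {a}) x"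
    using assms False by (intro min_sq_dist_antimono) (auto simp: voronoi_cell_def)
  then show ?thesis
    using min_sq_dist_outside_voronoi_cell[OF assms False] False by simp
qed

lemma S_elim:
  assumes "b \<in> S j"
  obtains p where "b = (p, p + 1 / real j)" "- 1 / real j \<le> p" "p \<le> 1"
  using assms by (auto simp: S_def)

lemma U_inv_in_S: "- 1 / real n \<le> u \<Longrightarrow> u \<le> 2 + 1 / real n \<Longrightarrow> U_inv n u \<in> S n"
  by (simp add: U_inv_def S_def field_simps)

lemma inj_U_inv: "inj (U_inv n)"
  by (rule injI) (simp add: U_inv_def)

lemma sq_dist_on_line: "sq_dist x (p, p + e) = (x + e)^2 / 2 + 2 * (p - (x - e) / 2)^2"
  by (simp add: sq_dist_def power2_eq_square field_simps)

text \<open>U_inv n x is the foot of the perpendicular from (x, 0) to the line of S n; for x \<ge> 0 the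
  parallel lines of S j, j < n, lie farther away.\<close>
lemma sq_dist_U_inv_less:
  assumes b: "b \<in> S j" and j: "1 \<le> j" "j \<le> n" and x: "0 \<le> x" and ne: "b \<noteq> U_inv n x"
  shows "sq_dist x (U_inv n x) < sq_dist x b"
proof (rule ccontr)
  define c e where "c = 1 / real n" and "e = 1 / real j"
  obtain p where p: "b = (p, p + e)"
    using b by (auto elim: S_elim simp: e_def)
  have ce: "0 < c" "c \<le> e"
    using j by (auto simp: c_def e_def frac_le)
  have U: "U_inv n x = ((x - c) / 2, (x - c) / 2 + c)"
    by (simp add: U_inv_def c_def)
  assume "\<not> ?thesis"
  then have "(x + e)^2 / 2 + 2 * (p - (x - e) / 2)^2 \<le> (x + c)^2 / 2"
    unfolding p U sq_dist_on_line by simp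
  moreover have "(x + c)^2 \<le> (x + e)^2"
    using ce x by (intro power_mono) auto
  moreover have "0 \<le> (p - (x - e) / 2)^2"
    by simp
  ultimately have "(x + c)^2 = (x + e)^2" "(p - (x - e) / 2)^2 = 0"
    by linarith+
  then have "c = e" "p = (x - c) / 2"
    using ce x by (auto simp: power2_eq_iff)
  then show False
    using ne p U by simp
qed

lemma admissible_finite_nonempty: "admissible n \<alpha> \<Longrightarrow> finite \<alpha> \<and> \<alpha> \<noteq> {}"
  by (auto simp: admissible_def)

lemma admissible_replace:
  assumes "admissible n \<alpha>" "a \<in> \<alpha>" "a' \<in> S n" "n \<ge> 1"
  shows "admissible n (insert a' (\<alpha> - {a}))"
proof -
  have "finite \<alpha>"
    using assms(1) by (simp add: admissible_def)
  then have "card (insert a' (\<alpha> - {a})) \<le> Suc (card (\<alpha> - {a}))"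
    by (simp add: card_insert_if)
  also have "\<dots> = card \<alpha>"
    using \<open>finite \<alpha>\<close> assms(2) by (rule card_Suc_Diff1)
  finally have "card (insert a' (\<alpha> - {a})) \<le> card \<alpha>" .
  then show ?thesis
    using assms by (auto simp: admissible_def card_gt_0_iff Suc_le_eq)
qed

lemma constrained_optimal_le:
  assumes "constrained_optimal P n \<alpha>" "admissible n \<beta>"
  shows "distortion P \<alpha> \<le> distortion P \<beta>"
proof -
  have "bdd_below {distortion P \<gamma> | \<gamma>. admissible n \<gamma>}"
  proof (rule bdd_belowI)
    fix y assume "y \<in> {distortion P \<gamma> | \<gamma>. admissible n \<gamma>}"
    then obtain \<gamma> where "admissible n \<gamma>" "y = distortion P \<gamma>"
      by blast
    then show "0 \<le> y"
      using admissible_finite_nonempty min_sq_dist_nonneg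
      by (simp add: distortion_eq_integral_min_sq_dist Bochner_Integration.integral_nonneg)
  qed
  then have "constrained_error P n \<le> distortion P \<beta>"
    unfolding constrained_error_def using assms(2) by (intro cInf_lower) auto
  then show ?thesis
    using assms(1) by (simp add: constrained_optimal_def)
qed

lemma integral_pos_at_support_point:
  fixes h :: "'a::metric_space \<Rightarrow> real"
  assumes sets_M: "sets M = sets borel" and "integrable M h" and nonneg: "\<And>x. 0 \<le> h x"
    and "continuous_on UNIV h" and "0 < h z"
    and support: "\<And>\<delta>. 0 < \<delta> \<Longrightarrow> 0 < measure M (ball z \<delta>)"
  shows "0 < integral\<^sup>L M h"
proof -
  have "open {x. 0 < h x}"
    using assms(4) by (intro open_Collect_less) (auto intro: continuous_intros)
  then obtain \<delta> where "0 < \<delta>" and ball: "ball z \<delta> \<subseteq> {x. 0 < h x}"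
    using \<open>0 < h z\<close> by (auto elim!: openE)
  have "integral\<^sup>L M h \<noteq> 0"
  proof
    assume "integral\<^sup>L M h = 0"
    then have "AE x in M. h x = 0"
      using integral_nonneg_eq_0_iff_AE[OF assms(2)] nonneg by simp
    then have "AE x in M. x \<notin> ball z \<delta>"
      by eventually_elim (use ball in auto)
    then have "ball z \<delta> \<in> null_sets M"
      using sets_M by (subst AE_iff_null_sets) auto
    then show False
      using support[OF \<open>0 < \<delta>\<close>] measure_eq_0_null_sets by fastforce
  qed
  then show ?thesis
    using Bochner_Integration.integral_nonneg[of M h] nonneg by fastforce
qed

locale cantor_distribution = prob_space P for P :: "real measure" +
  assumes sets_P: "sets P = sets borel"
    and self_similar: "\<And>A. A \<in> sets borel \<Longrightarrow>
      measure P A = measure P (T1 -` A) / 2 + measure P (T2 -` A) / 2"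

lemma cantor_distributionI: "is_cantor_dist P \<Longrightarrow> cantor_distribution P"
  unfolding is_cantor_dist_def cantor_distribution_def cantor_distribution_axioms_def by blast

context cantor_distribution
begin

lemma space_P [simp]: "space P = UNIV"
  using sets_eq_imp_space_eq[OF sets_P] by simp

lemma borel_measurable_P_iff: "f \<in> borel_measurable P \<longleftrightarrow> f \<in> borel_measurable borel"
  by (simp add: measurable_cong_sets[OF sets_P refl])

lemma measure_eq_0_iff_AE: "A \<in> sets borel \<Longrightarrow> measure P A = 0 \<longleftrightarrow> (AE x in P. x \<notin> A)"
  by (simp add: AE_iff_null_sets[symmetric] sets_P emeasure_eq_measure null_sets_def)

lemma measure_Ioi_triple: "1 \<le> r \<Longrightarrow> measure P {r<..} = measure P {3 * r<..}"
proof -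
  assume "1 \<le> r"
  have "T1 -` {r<..} = {3 * r<..}" "T2 -` {r<..} = {3 * r - 2<..}"
    by (auto simp: T1_def T2_def)
  then have "measure P {r<..} = measure P {3 * r<..} / 2 + measure P {3 * r - 2<..} / 2"
    using self_similar[of "{r<..}"] by simp
  moreover have "measure P {3 * r - 2<..} \<le> measure P {r<..}" "measure P {3 * r<..} \<le> measure P {r<..}"
    using \<open>1 \<le> r\<close> by (auto intro!: finite_measure_mono simp: sets_P)
  ultimately show ?thesis by linarith
qed

lemma measure_Iio_triple: "r \<le> 0 \<Longrightarrow> measure P {..<r} = measure P {..<3 * r - 2}"
proof -
  assume "r \<le> 0"
  have "T1 -` {..<r} = {..<3 * r}" "T2 -` {..<r} = {..<3 * r - 2}"
    by (auto simp: T1_def T2_def)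
  then have "measure P {..<r} = measure P {..<3 * r} / 2 + measure P {..<3 * r - 2} / 2"
    using self_similar[of "{..<r}"] by simp
  moreover have "measure P {..<3 * r - 2} \<le> measure P {..<r}" "measure P {..<3 * r} \<le> measure P {..<r}"
    using \<open>r \<le> 0\<close> by (auto intro!: finite_measure_mono simp: sets_P)
  ultimately show ?thesis by linarith
qed

lemma AE_le_one: "AE x in P. x \<le> 1"
proof -
  have "measure P {1<..} = measure P {3 ^ k<..}" for k :: nat
  proof (induction k)
    case (Suc k)
    then show ?case
      using measure_Ioi_triple[of "3 ^ k"] by simp
  qed simp
  moreover have "{1<..} - {3 ^ k<..} = {1<..(3::real) ^ k}" for k :: nat
    by auto
  ultimately have "measure P {1<..(3::real) ^ k} = 0" for k :: nat
    using finite_measure_Diff[of "{1<..}" "{3 ^ k<..}"] by (simp add: sets_P)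
  then have "AE x in P. x \<notin> {1<..(3::real) ^ k}" for k :: nat
    by (subst measure_eq_0_iff_AE[symmetric]) auto
  then have "AE x in P. \<forall>k::nat. x \<notin> {1<..3 ^ k}"
    by (simp only: AE_all_countable) blast
  then show ?thesis
  proof eventually_elim
    case (elim x)
    obtain k :: nat where "x < 3 ^ k"
      using real_arch_pow[of 3 x] by auto
    then show ?case
      using elim[rule_format, of k] by auto
  qed
qed

lemma AE_nonneg: "AE x in P. 0 \<le> x"
proof -
  have "measure P {..<0} = measure P {..<1 - 3 ^ k}" for k :: nat
  proof (induction k)
    case (Suc k)
    then show ?case
      using measure_Iio_triple[of "1 - 3 ^ k"] by (simp add: algebra_simps)
  qed simp
  moreover have "{..<0} - {..<1 - 3 ^ k} = {1 - (3::real) ^ k..<0}" for k :: nat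
    by auto
  ultimately have "measure P {1 - (3::real) ^ k..<0} = 0" for k :: nat
    using finite_measure_Diff[of "{..<0}" "{..<1 - 3 ^ k}"] by (simp add: sets_P)
  then have "AE x in P. x \<notin> {1 - (3::real) ^ k..<0}" for k :: nat
    by (subst measure_eq_0_iff_AE[symmetric]) auto
  then have "AE x in P. \<forall>k::nat. x \<notin> {1 - 3 ^ k..<0}"
    by (simp only: AE_all_countable) blast
  then show ?thesis
  proof eventually_elim
    case (elim x)
    obtain k :: nat where "1 - x < 3 ^ k"
      using real_arch_pow[of 3 "1 - x"] by auto
    then show ?case
      using elim[rule_format, of k] by auto
  qed
qed

lemma AE_unit_interval: "AE x in P. x \<in> {0..1}"
  using AE_nonneg AE_le_one by eventually_elim simp

lemma integrable_indicator_continuous: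
  fixes f :: "real \<Rightarrow> real"
  assumes "V \<in> sets borel" "continuous_on UNIV f"
  shows "integrable P (\<lambda>x. indicator V x * f x)"
proof -
  have "bounded (f ` {0..1})"
    using assms(2) by (intro compact_imp_bounded compact_continuous_image)
      (auto intro: continuous_on_subset)
  then obtain B where B: "\<forall>x\<in>{0..1}. \<bar>f x\<bar> \<le> B"
    unfolding bounded_iff by auto
  show ?thesis
  proof (rule integrable_const_bound[where B = B])
    show "AE x in P. norm (indicator V x * f x) \<le> B"
      using AE_unit_interval by eventually_elim (use B in \<open>auto simp: indicator_def\<close>)
    show "(\<lambda>x. indicator V x * f x) \<in> borel_measurable P"
      unfolding borel_measurable_P_iff
      using assms(1) borel_measurable_continuous_onI[OF assms(2)] by measurable
  qed
qed

lemma integrable_continuous: "continuous_on UNIV f \<Longrightarrow> integrable P (f :: real \<Rightarrow> real)"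
  using integrable_indicator_continuous[of UNIV f] by simp

lemma measure_preimage_T1_le: "A \<in> sets borel \<Longrightarrow> measure P (T1 -` A) / 2 \<le> measure P A"
  using self_similar[of A] by simp

lemma measure_preimage_T2_le: "A \<in> sets borel \<Longrightarrow> measure P (T2 -` A) / 2 \<le> measure P A"
  using self_similar[of A] by simp

lemma measure_near_one: "(1 / 2) ^ k \<le> measure P {1 - (1 / 3) ^ k..1}"
proof (induction k)
  case 0
  have "measure P {0..1} = 1"
    using AE_unit_interval AE_in_set_eq_1[of "{0..1}"] by (simp add: sets_P)
  then show ?case by simp
next
  case (Suc k)
  have "T2 -` {1 - (1 / 3) ^ Suc k..1} = {1 - (1 / 3) ^ k..(1::real)}"
    by (auto simp: T2_def field_simps)
  then show ?case
    using Suc measure_preimage_T2_le[of "{1 - (1 / 3) ^ Suc k..1}"] by simp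
qed

lemma measure_left_of_third_power:
  "(1 / 2) ^ (m + k) \<le> measure P {(1 / 3) ^ m - (1 / 3) ^ (m + k)..(1 / 3) ^ m}"
proof (induction m)
  case 0
  then show ?case using measure_near_one[of k] by simp
next
  case (Suc m)
  have "T1 -` {(1 / 3) ^ Suc m - (1 / 3) ^ (Suc m + k)..(1 / 3) ^ Suc m}
      = {(1 / 3) ^ m - (1 / 3) ^ (m + k)..(1 / 3 :: real) ^ m}"
    by (auto simp: T1_def field_simps)
  then show ?case
    using Suc measure_preimage_T1_le[of "{(1 / 3) ^ Suc m - (1 / 3) ^ (Suc m + k)..(1 / 3) ^ Suc m}"]
    by simp
qed

lemma measure_ball_third_power_pos: "0 < \<delta> \<Longrightarrow> 0 < measure P (ball ((1 / 3) ^ m) \<delta>)"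
proof -
  assume "0 < \<delta>"
  then obtain k where k: "(1 / 3 :: real) ^ k < \<delta>"
    using real_arch_pow_inv[of \<delta> "1 / 3"] by auto
  have le: "(1 / 3 :: real) ^ (m + k) \<le> (1 / 3) ^ k"
    by (rule power_decreasing) auto
  have "{(1 / 3) ^ m - (1 / 3) ^ (m + k)..(1 / 3) ^ m} \<subseteq> ball ((1 / 3 :: real) ^ m) \<delta>"
  proof
    fix x assume "x \<in> {(1 / 3) ^ m - (1 / 3) ^ (m + k)..(1 / 3 :: real) ^ m}"
    then have "(1 / 3) ^ m - (1 / 3) ^ (m + k) \<le> x" "x \<le> (1 / 3) ^ m"
      by auto
    then have "0 \<le> (1 / 3) ^ m - x" "(1 / 3) ^ m - x < \<delta>"
      using le k by linarith+
    then show "x \<in> ball ((1 / 3) ^ m) \<delta>"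
      by (simp add: dist_real_def)
  qed
  then have "measure P {(1 / 3) ^ m - (1 / 3) ^ (m + k)..(1 / 3) ^ m} \<le> measure P (ball ((1 / 3) ^ m) \<delta>)"
    by (intro finite_measure_mono) (simp_all add: sets_P)
  then have "(1 / 2) ^ (m + k) \<le> measure P (ball ((1 / 3) ^ m) \<delta>)"
    using measure_left_of_third_power[of m k] by linarith
  moreover have "0 < (1 / 2 :: real) ^ (m + k)"
    by simp
  ultimately show ?thesis
    by linarith
qed

lemma cond_exp_mem_unit_interval:
  assumes "V \<in> sets borel" "0 < measure P V"
  shows "cond_exp P V \<in> {0..1}"
proof -
  have int: "integrable P (\<lambda>x. indicator V x * x)" "integrable P (\<lambda>x. indicator V x * (1 :: real))"
    using integrable_indicator_continuous[OF assms(1) continuous_on_id]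
      integrable_indicator_continuous[OF assms(1) continuous_on_const[of UNIV "1 :: real"]] by simp_all
  have "0 \<le> (LINT x:V|P. x)"
    unfolding set_lebesgue_integral_def
    using AE_unit_interval by (auto intro!: integral_nonneg_AE simp: indicator_def)
  moreover have "(LINT x:V|P. x) \<le> (\<integral>x. indicator V x * (1 :: real) \<partial>P)"
    unfolding set_lebesgue_integral_def
    using int AE_unit_interval by (auto intro!: integral_mono_AE simp: indicator_def)
  ultimately show ?thesis
    using assms by (simp add: cond_exp_def sets_P)
qed

lemma integral_indicator_sq_dist_diff:
  assumes "V \<in> sets borel"
  shows "(\<integral>x. indicator V x * (sq_dist x a' - sq_dist x a) \<partial>P)
    = 2 * (fst a - fst a') * (LINT x:V|P. x)
      + ((fst a')^2 + (snd a')^2 - (fst a)^2 - (snd a)^2) * measure P V"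
proof -
  have "indicator V x * (sq_dist x a' - sq_dist x a)
      = 2 * (fst a - fst a') * (indicator V x * x)
        + ((fst a')^2 + (snd a')^2 - (fst a)^2 - (snd a)^2) * (indicator V x * (1 :: real))" for x
    by (simp add: sq_dist_def power2_eq_square algebra_simps)
  moreover have "integrable P (\<lambda>x. indicator V x * x)" "integrable P (\<lambda>x. indicator V x * (1 :: real))"
    using integrable_indicator_continuous[OF assms continuous_on_id]
      integrable_indicator_continuous[OF assms continuous_on_const[of UNIV "1 :: real"]] by simp_all
  ultimately show ?thesis
    using assms by (simp add: set_lebesgue_integral_def sets_P)
qed

lemma integrable_min_sq_dist: "finite \<alpha> \<Longrightarrow> \<alpha> \<noteq> {} \<Longrightarrow> integrable P (min_sq_dist \<alpha>)"
  by (intro integrable_continuous continuous_on_min_sq_dist)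

lemma integral_voronoi_cell_replace_nonneg:
  assumes opt: "constrained_optimal P n \<alpha>" and a: "a \<in> \<alpha>" and a': "a' \<in> S n" and "1 \<le> n"
  shows "0 \<le> (\<integral>x. indicator (voronoi_cell a \<alpha>) x * (sq_dist x a' - sq_dist x a) \<partial>P)"
    (is "0 \<le> integral\<^sup>L P ?g")
proof -
  define \<beta> where "\<beta> = insert a' (\<alpha> - {a})"
  have adm: "admissible n \<alpha>"
    using opt by (simp add: constrained_optimal_def)
  then have fin: "finite \<alpha>" "\<alpha> \<noteq> {}"
    by (auto dest: admissible_finite_nonempty)
  have adm_\<beta>: "admissible n \<beta>"
    unfolding \<beta>_def using adm a a' \<open>1 \<le> n\<close> by (rule admissible_replace)
  have int_g: "integrable P ?g"
    by (intro integrable_indicator_continuous borel_closed closed_voronoi_cell continuous_intros)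
  have "distortion P \<alpha> \<le> distortion P \<beta>"
    using opt adm_\<beta> by (rule constrained_optimal_le)
  also have "\<dots> \<le> (\<integral>x. min_sq_dist \<alpha> x + ?g x \<partial>P)"
    unfolding distortion_eq_integral_min_sq_dist \<beta>_def
    using fin adm_\<beta> int_g admissible_finite_nonempty a
    by (intro integral_mono integrable_min_sq_dist Bochner_Integration.integrable_add
        min_sq_dist_replace_le) (auto simp: \<beta>_def)
  also have "\<dots> = distortion P \<alpha> + integral\<^sup>L P ?g"
    unfolding distortion_eq_integral_min_sq_dist
    using fin int_g integrable_min_sq_dist by simp
  finally show ?thesis
    by simp
qed

lemma integral_min_sq_dist_remove_null_cell:
  assumes "finite \<alpha>" "a \<in> \<alpha>" "\<alpha> - {a} \<noteq> {}" "measure P (voronoi_cell a \<alpha>) = 0"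
  shows "(\<integral>x. min_sq_dist (\<alpha> - {a}) x \<partial>P) = (\<integral>x. min_sq_dist \<alpha> x \<partial>P)"
proof (rule integral_cong_AE)
  show "min_sq_dist (\<alpha> - {a}) \<in> borel_measurable P" "min_sq_dist \<alpha> \<in> borel_measurable P"
    using assms(1-3) by (auto simp: borel_measurable_P_iff
        intro!: borel_measurable_continuous_onI continuous_on_min_sq_dist)
  have "AE x in P. x \<notin> voronoi_cell a \<alpha>"
    using assms(4) measure_eq_0_iff_AE[OF borel_closed[OF closed_voronoi_cell]] by simp
  then show "AE x in P. min_sq_dist (\<alpha> - {a}) x = min_sq_dist \<alpha> x"
    by eventually_elim (use assms(1,2) min_sq_dist_outside_voronoi_cell in blast)
qed

lemma integral_min_sq_dist_insert_U_inv_less: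
  assumes fin: "finite \<beta>" "\<beta> \<noteq> {}" and sub: "\<beta> \<subseteq> (\<Union>j\<in>{1..n}. S j)"
    and new: "U_inv n ((1 / 3) ^ m) \<notin> \<beta>"
  shows "(\<integral>x. min_sq_dist (insert (U_inv n ((1 / 3) ^ m)) \<beta>) x \<partial>P) < (\<integral>x. min_sq_dist \<beta> x \<partial>P)"
proof -
  define u x0 where "u = U_inv n ((1 / 3) ^ m)" and "x0 = (1 / 3 :: real) ^ m"
  define \<gamma> where "\<gamma> = insert u \<beta>"
  have fin_\<gamma>: "finite \<gamma>" "\<gamma> \<noteq> {}"
    using fin by (auto simp: \<gamma>_def)
  have "min_sq_dist \<gamma> x0 < min_sq_dist \<beta> x0"
  proof -
    obtain b where b: "b \<in> \<beta>" "min_sq_dist \<beta> x0 = sq_dist x0 b"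
      using min_sq_dist_attained fin by blast
    then obtain j where "j \<in> {1..n}" "b \<in> S j"
      using sub by blast
    moreover have "b \<noteq> U_inv n x0"
      using b new by (auto simp: x0_def)
    ultimately have "sq_dist x0 u < sq_dist x0 b"
      unfolding u_def x0_def[symmetric] by (intro sq_dist_U_inv_less) (auto simp: x0_def)
    then show ?thesis
      using b min_sq_dist_le[of \<gamma> u x0] fin_\<gamma> by (simp add: \<gamma>_def)
  qed
  moreover have "min_sq_dist \<gamma> x \<le> min_sq_dist \<beta> x" for x
    using fin_\<gamma> fin by (intro min_sq_dist_antimono) (auto simp: \<gamma>_def)
  ultimately have "0 < (\<integral>x. min_sq_dist \<beta> x - min_sq_dist \<gamma> x \<partial>P)"
    using fin fin_\<gamma> measure_ball_third_power_pos[of _ m]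
    by (intro integral_pos_at_support_point[where z = x0])
      (auto simp: sets_P x0_def intro!: integrable_continuous continuous_intros continuous_on_min_sq_dist)
  then show ?thesis
    using fin fin_\<gamma> integrable_min_sq_dist by (simp add: \<gamma>_def u_def)
qed

lemma measure_voronoi_cell_pos:
  assumes opt: "constrained_optimal P n \<alpha>" and a: "a \<in> \<alpha>"
  shows "0 < measure P (voronoi_cell a \<alpha>)"
proof (rule ccontr)
  assume "\<not> ?thesis"
  then have null: "measure P (voronoi_cell a \<alpha>) = 0"
    using measure_nonneg[of P "voronoi_cell a \<alpha>"] by linarith
  have adm: "admissible n \<alpha>"
    using opt by (simp add: constrained_optimal_def)
  then have fin: "finite \<alpha>" and sub: "\<alpha> \<subseteq> (\<Union>j\<in>{1..n}. S j)" and "1 \<le> n"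
    using a by (auto simp: admissible_def)
  define \<beta> where "\<beta> = \<alpha> - {a}"
  show False
  proof (cases "\<beta> = {}")
    case True
    then have "voronoi_cell a \<alpha> = UNIV"
      using a by (auto simp: \<beta>_def voronoi_cell_def)
    then show False
      using null prob_space by simp
  next
    case False
    have "inj (\<lambda>m. U_inv n ((1 / 3) ^ m))"
    proof (rule injI)
      fix i k :: nat
      assume "U_inv n ((1 / 3) ^ i) = U_inv n ((1 / 3) ^ k)"
      then have "(1 / 3 :: real) ^ i = (1 / 3) ^ k"
        by (rule injD[OF inj_U_inv])
      then show "i = k"
        by (simp add: power_inject_exp')
    qed
    then have "\<not> range (\<lambda>m. U_inv n ((1 / 3) ^ m)) \<subseteq> \<beta>"
      using fin range_inj_infinite finite_subset by (metis \<beta>_def finite_Diff)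
    then obtain m where new: "U_inv n ((1 / 3) ^ m) \<notin> \<beta>"
      by blast
    define \<gamma> where "\<gamma> = insert (U_inv n ((1 / 3) ^ m)) \<beta>"
    have "0 \<le> (1 / 3 :: real) ^ m" "(1 / 3 :: real) ^ m \<le> 1" "0 \<le> 1 / real n"
      by (simp_all add: power_le_one)
    then have "U_inv n ((1 / 3) ^ m) \<in> S n"
      by (intro U_inv_in_S) linarith+
    then have "admissible n \<gamma>"
      unfolding \<gamma>_def \<beta>_def using adm a \<open>1 \<le> n\<close> by (intro admissible_replace)
    then have "distortion P \<alpha> \<le> distortion P \<gamma>"
      using opt constrained_optimal_le by blast
    also have "\<dots> < distortion P \<beta>"
      unfolding distortion_eq_integral_min_sq_dist \<gamma>_def
      using fin False sub new by (intro integral_min_sq_dist_insert_U_inv_less) (auto simp: \<beta>_def)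
    also have "\<dots> = distortion P \<alpha>"
      unfolding distortion_eq_integral_min_sq_dist \<beta>_def
      using fin a False null by (intro integral_min_sq_dist_remove_null_cell) (auto simp: \<beta>_def)
    finally show False
      by simp
  qed
qed

lemma constrained_optimal_point_eq_U_inv_cond_exp:
  assumes opt: "constrained_optimal P n \<alpha>" and a: "a \<in> \<alpha>"
  shows "a = U_inv n (cond_exp P (voronoi_cell a \<alpha>)) \<and> a \<in> S n"
proof -
  define V where "V = voronoi_cell a \<alpha>"
  define E c where "E = cond_exp P V" and "c = 1 / real n"
  have V: "V \<in> sets borel"
    by (simp add: V_def borel_closed closed_voronoi_cell)
  have m: "0 < measure P V"
    unfolding V_def using opt a by (rule measure_voronoi_cell_pos)
  have E: "0 \<le> E" "E \<le> 1"
    using cond_exp_mem_unit_interval[OF V m] by (simp_all add: E_def)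
  have "1 \<le> n" and "a \<in> (\<Union>j\<in>{1..n}. S j)"
    using opt a by (auto simp: constrained_optimal_def admissible_def)
  then obtain j p where j: "1 \<le> j" "j \<le> n" and a_eq: "a = (p, p + 1 / real j)"
    by (auto elim: S_elim)
  define e where "e = 1 / real j"
  have ce: "0 < c" "c \<le> e"
    using j by (auto simp: c_def e_def frac_le)
  have U: "U_inv n E = ((E - c) / 2, (E - c) / 2 + c)"
    by (simp add: U_inv_def c_def)
  have U_S: "U_inv n E \<in> S n"
    using E ce unfolding c_def by (intro U_inv_in_S) linarith+
  have "0 \<le> (\<integral>x. indicator V x * (sq_dist x (U_inv n E) - sq_dist x a) \<partial>P)"
    unfolding V_def using opt a U_S \<open>1 \<le> n\<close> by (rule integral_voronoi_cell_replace_nonneg)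
  also have "\<dots> = measure P V * ((c - e) * (E + (c + e) / 2) - 2 * (p - (E - e) / 2)^2)"
    using m unfolding integral_indicator_sq_dist_diff[OF V] U a_eq e_def[symmetric]
    by (simp add: E_def cond_exp_def power2_eq_square field_simps)
  finally have "0 \<le> (c - e) * (E + (c + e) / 2) - 2 * (p - (E - e) / 2)^2"
    using m by (simp add: zero_le_mult_iff)
  moreover have "(c - e) * (E + (c + e) / 2) \<le> 0"
    using ce E by (intro mult_nonpos_nonneg) auto
  moreover have "0 \<le> (p - (E - e) / 2)^2"
    by simp
  ultimately have "(c - e) * (E + (c + e) / 2) = 0" and p_eq: "(p - (E - e) / 2)^2 = 0"
    by linarith+
  moreover have "0 < E + (c + e) / 2"
    using ce E by (simp add: field_simps)
  ultimately have "c = e"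
    by simp
  moreover from p_eq have "p = (E - e) / 2"
    by simp
  ultimately have "a = U_inv n E"
    using U a_eq e_def by simp
  then show ?thesis
    using U_S by (simp add: E_def V_def)
qed

end

theorem mainTheorem1:
  fixes P :: "real measure" and n :: nat and \<alpha> :: "(real \<times> real) set"
  assumes "is_cantor_dist P"
    and "n \<ge> 1"
    and "constrained_optimal P n \<alpha>"
    and "card \<alpha> = n"
  shows "\<forall>a\<in>\<alpha>. a = U_inv n (cond_exp P {x. (x, 0) \<in> voronoi a \<alpha>}) \<and> a \<in> S n"
proof -
  interpret cantor_distribution P
    using assms(1) by (rule cantor_distributionI)
  show ?thesis
    using constrained_optimal_point_eq_U_inv_cond_exp[OF assms(3)] by (simp add: voronoi_real_axis)
qed

end
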